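(* Let $X=\begin{pmatrix}0&u\sqrt\epsilon\\ v\sqrt\epsilon&0\end{pmatrix}$ with $u,v\in F$, $\nu(u)=0$ and $\nu(v)>0$. Let $s>0$ and $k\in\mathcal{K}$. Then $k^{-1}Xk\in X+\mathfrak{k}_s$ if and only if $k=cg$ for some $c\in T(X)$ and $g\in\mathcal{K}_s$.
   Context: $F$ non-archimedean local field, $p\neq2$, uniformiser $\varpi$, valuation $\nu$; $E=F[\sqrt\epsilon]$ unramified quadratic ($\epsilon\in\mathcal{O}_F^\times$ non-square). $G=\mathbb{U}(1,1)(F)$ (hermitian form $\mathrm{w}=\begin{pmatrix}0&1\\1&0\end{pmatrix}$), $\mathcal{K}=G\cap M_2(\mathcal{O}_E)$ with filtration $\mathcal{K}_n=\begin{pmatrix}1+\mathfrak{p}_E^n&\mathfrak{p}_E^n\\ \mathfrak{p}_E^n&1+\mathfrak{p}_E^n\end{pmatrix}\cap G$ ($\mathcal{K}_s:=\mathcal{K}_{\lceil s\rceil}$) and Lie algebra filtration $\mathfrak{k}_r=\begin{pmatrix}\mathfrak{p}_E^{\lceil r\rceil}&\sqrt\epsilon\mathfrak{p}_F^{\lceil r\rceil}\\ \sqrt\epsilon\mathfrak{p}_F^{\lceil r\rceil}&\mathfrak{p}_E^{\lceil r\rceil}\end{pmatrix}\cap\mathfrak{k}$. $T(X)$ is the centralizer of $X$ in $\mathcal{K}$, namely $\left\{\begin{pmatrix}a&b\\ bu^{-1}v&a\end{pmatrix}: a,b\in\mathcal{O}_E,\ a\overline{a}+b\overline{b}u^{-1}v=1,\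 \overline{a}b\in\sqrt\epsilon\mathcal{O}_F\right\}$. *)

theory Defs
  imports Complex_Main
begin

text \<open>The valuation is an integer-valued function, only meaningful on nonzero elements;
  the convention nu 0 = +infinity is encoded by the predicate vge.\<close>

definition vge :: "('a::field \<Rightarrow> int) \<Rightarrow> 'a \<Rightarrow> int \<Rightarrow> bool" where
  "vge nu x n \<longleftrightarrow> x = 0 \<or> nu x \<ge> n"

definition discrete_valuation :: "('a::field \<Rightarrow> int) \<Rightarrow> bool" where
  "discrete_valuation nu \<longleftrightarrow>
     (\<forall>x y. x \<noteq> 0 \<longrightarrow> y \<noteq> 0 \<longrightarrow> nu (x * y) = nu x + nu y) \<and>
     (\<forall>x y. x \<noteq> 0 \<longrightarrow> y \<noteq> 0 \<longrightarrow> x + y \<noteq> 0 \<longrightarrow> nu (x + y) \<ge> min (nu x) (nu y)) \<and>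
     (\<exists>w. w \<noteq> 0 \<and> nu w = 1)"

definition val_cauchy :: "('a::field \<Rightarrow> int) \<Rightarrow> (nat \<Rightarrow> 'a) \<Rightarrow> bool" where
  "val_cauchy nu f \<longleftrightarrow> (\<forall>n. \<exists>N. \<forall>i\<ge>N. \<forall>j\<ge>N. vge nu (f i - f j) n)"

definition val_converges :: "('a::field \<Rightarrow> int) \<Rightarrow> (nat \<Rightarrow> 'a) \<Rightarrow> 'a \<Rightarrow> bool" where
  "val_converges nu f L \<longleftrightarrow> (\<forall>n. \<exists>N. \<forall>i\<ge>N. vge nu (f i - L) n)"

definition val_complete :: "('a::field \<Rightarrow> int) \<Rightarrow> bool" where
  "val_complete nu \<longleftrightarrow> (\<forall>f. val_cauchy nu f \<longrightarrow> (\<exists>L. val_converges nu f L))"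

definition finite_residue_field :: "('a::field \<Rightarrow> int) \<Rightarrow> bool" where
  "finite_residue_field nu \<longleftrightarrow>
     (\<exists>S. finite S \<and> S \<subseteq> {x. vge nu x 0} \<and>
          (\<forall>x. vge nu x 0 \<longrightarrow> (\<exists>s\<in>S. vge nu (x - s) 1)))"

definition nonarch_local_field :: "('a::field \<Rightarrow> int) \<Rightarrow> bool" where
  "nonarch_local_field nu \<longleftrightarrow>
     discrete_valuation nu \<and> val_complete nu \<and> finite_residue_field nu"

definition residue_char_not_2 :: "('a::field \<Rightarrow> int) \<Rightarrow> bool" where
  "residue_char_not_2 nu \<longleftrightarrow> (2::'a) \<noteq> 0 \<and> nu 2 = 0"

definition nonsquare_unit :: "('a::field \<Rightarrow> int) \<Rightarrow> 'a \<Rightarrow> bool" where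
  "nonsquare_unit nu e \<longleftrightarrow> e \<noteq> 0 \<and> nu e = 0 \<and> \<not> (\<exists>y. y * y = e)"

text \<open>The pair (a, b) represents a + b sqrt(eps).\<close>
type_synonym 'a ext = "'a \<times> 'a"

definition eadd :: "'a::field ext \<Rightarrow> 'a ext \<Rightarrow> 'a ext" where
  "eadd x y = (fst x + fst y, snd x + snd y)"
definition eneg :: "'a::field ext \<Rightarrow> 'a ext" where
  "eneg x = (- fst x, - snd x)"
definition emul :: "'a::field \<Rightarrow> 'a ext \<Rightarrow> 'a ext \<Rightarrow> 'a ext" where
  "emul e x y = (fst x * fst y + e * snd x * snd y, fst x * snd y + snd x * fst y)"
definition econj :: "'a::field ext \<Rightarrow> 'a ext" where
  "econj x = (fst x, - snd x)"
definition einv :: "'a::field \<Rightarrow> 'a ext \<Rightarrow> 'a ext" where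
  "einv e x = (let n = fst x * fst x - e * snd x * snd x in (fst x / n, - snd x / n))"

definition ezero :: "'a::field ext" where "ezero = (0, 0)"
definition eone :: "'a::field ext" where "eone = (1, 0)"

text \<open>O_E and p_E^n (E/F unramified, so p_E^n = varpi^n O_E = p_F^n + sqrt(eps) p_F^n).\<close>
definition OE :: "('a::field \<Rightarrow> int) \<Rightarrow> 'a ext set" where
  "OE nu = {x. vge nu (fst x) 0 \<and> vge nu (snd x) 0}"
definition pE :: "('a::field \<Rightarrow> int) \<Rightarrow> int \<Rightarrow> 'a ext set" where
  "pE nu n = {x. vge nu (fst x) n \<and> vge nu (snd x) n}"
definition sqeps_pF :: "('a::field \<Rightarrow> int) \<Rightarrow> int \<Rightarrow> 'a ext set" where
  "sqeps_pF nu n = {x. fst x = 0 \<and> vge nu (snd x) n}"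

datatype 'a m2 = M2 "'a ext" "'a ext" "'a ext" "'a ext"
  \<comment> \<open>M2 a b c d is the matrix ((a, b), (c, d))\<close>

fun m11 where "m11 (M2 a b c d) = a"
fun m12 where "m12 (M2 a b c d) = b"
fun m21 where "m21 (M2 a b c d) = c"
fun m22 where "m22 (M2 a b c d) = d"

fun madd :: "'a::field m2 \<Rightarrow> 'a m2 \<Rightarrow> 'a m2" where
  "madd (M2 a b c d) (M2 a' b' c' d') = M2 (eadd a a') (eadd b b') (eadd c c') (eadd d d')"
fun mneg :: "'a::field m2 \<Rightarrow> 'a m2" where
  "mneg (M2 a b c d) = M2 (eneg a) (eneg b) (eneg c) (eneg d)"
definition msub :: "'a::field m2 \<Rightarrow> 'a m2 \<Rightarrow> 'a m2" where
  "msub A B = madd A (mneg B)"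
fun mmul :: "'a::field \<Rightarrow> 'a m2 \<Rightarrow> 'a m2 \<Rightarrow> 'a m2" where
  "mmul e (M2 a b c d) (M2 a' b' c' d') =
     M2 (eadd (emul e a a') (emul e b c')) (eadd (emul e a b') (emul e b d'))
        (eadd (emul e c a') (emul e d c')) (eadd (emul e c b') (emul e d d'))"
fun mstar :: "'a::field m2 \<Rightarrow> 'a m2" where
  "mstar (M2 a b c d) = M2 (econj a) (econj c) (econj b) (econj d)"
fun mdet :: "'a::field \<Rightarrow> 'a m2 \<Rightarrow> 'a ext" where
  "mdet e (M2 a b c d) = eadd (emul e a d) (eneg (emul e b c))"
fun minv :: "'a::field \<Rightarrow> 'a m2 \<Rightarrow> 'a m2" where
  "minv e (M2 a b c d) =
     (let di = einv e (mdet e (M2 a b c d))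
      in M2 (emul e d di) (eneg (emul e b di)) (eneg (emul e c di)) (emul e a di))"

definition mzero :: "'a::field m2" where "mzero = M2 ezero ezero ezero ezero"
definition mw :: "'a::field m2" where "mw = M2 ezero eone eone ezero"

definition U11 :: "'a::field \<Rightarrow> 'a m2 set" where
  "U11 e = {g. mmul e (mmul e (mstar g) mw) g = mw}"

definition entries_in :: "'a ext set \<Rightarrow> 'a ext set \<Rightarrow> 'a m2 \<Rightarrow> bool" where
  "entries_in Dg Off g \<longleftrightarrow> m11 g \<in> Dg \<and> m22 g \<in> Dg \<and> m12 g \<in> Off \<and> m21 g \<in> Off"

definition Kgrp :: "('a::field \<Rightarrow> int) \<Rightarrow> 'a \<Rightarrow> 'a m2 set" where
  "Kgrp nu e = U11 e \<inter> {g. entries_in (OE nu) (OE nu) g}"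

definition Kfilt :: "('a::field \<Rightarrow> int) \<Rightarrow> 'a \<Rightarrow> int \<Rightarrow> 'a m2 set" where
  "Kfilt nu e n = U11 e \<inter>
     {g. eadd (m11 g) (eneg eone) \<in> pE nu n \<and> eadd (m22 g) (eneg eone) \<in> pE nu n \<and>
         m12 g \<in> pE nu n \<and> m21 g \<in> pE nu n}"

definition Ks :: "('a::field \<Rightarrow> int) \<Rightarrow> 'a \<Rightarrow> real \<Rightarrow> 'a m2 set" where
  "Ks nu e s = Kfilt nu e \<lceil>s\<rceil>"

definition lie_u11 :: "'a::field \<Rightarrow> 'a m2 set" where
  "lie_u11 e = {X. madd (mmul e (mstar X) mw) (mmul e mw X) = mzero}"

definition frak_k :: "('a::field \<Rightarrow> int) \<Rightarrow> 'a \<Rightarrow> 'a m2 set" where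
  "frak_k nu e = lie_u11 e \<inter> {X. entries_in (OE nu) (OE nu) X}"

definition frak_k_r :: "('a::field \<Rightarrow> int) \<Rightarrow> 'a \<Rightarrow> real \<Rightarrow> 'a m2 set" where
  "frak_k_r nu e r = frak_k nu e \<inter>
     {X. entries_in (pE nu \<lceil>r\<rceil>) (sqeps_pF nu \<lceil>r\<rceil>) X}"

definition centralizer_K :: "('a::field \<Rightarrow> int) \<Rightarrow> 'a \<Rightarrow> 'a m2 \<Rightarrow> 'a m2 set" where
  "centralizer_K nu e X = {k \<in> Kgrp nu e. mmul e k X = mmul e X k}"

definition Xuv :: "'a::field \<Rightarrow> 'a \<Rightarrow> 'a m2" where
  "Xuv u v = M2 (0, 0) (0, u) (0, v) (0, 0)"

end

theory Submission
  imports Defs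
begin

(* Put Z = k^-1 X k - X and n = ceil s >= 1. Since k and k^-1 are integral, Z lies in k_s iff the
   commutator X k - k X has entries in p_E^n; the Lie algebra condition already puts the
   off-diagonal entries of Z into sqrt(eps) F. If k = c g with c in T(X) and g in K_n, this
   commutator is c (X (g - 1) - (g - 1) X).
   Conversely, let w = v/u and let (A, B) be the first row of k. The commutator condition says
   that k is congruent mod p_E^n to kappa = ((A, B), (w B, A)). Matrices of this shape commute
   with X, and for them unitarity means conj(kappa) kappa = 1, which kappa only satisfies
   mod p_E^n. A Cayley (Hilbert 90) correction repairs this: for z = l + conj(l) kappa, with
   l in {1, sqrt eps} chosen so that det z is a unit, c = conj(z)^-1 z is unitary, commutes with X,
   and c - kappa = conj(z)^-1 l (1 - conj(kappa) kappa) vanishes mod p_E^n; so g = c^-1 k is in K_n. *)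

section \<open>Discrete valuations\<close>

definition val_unit :: "('a::field \<Rightarrow> int) \<Rightarrow> 'a \<Rightarrow> bool" where
  "val_unit nu x \<longleftrightarrow> x \<noteq> 0 \<and> nu x = 0"

locale discretely_valued =
  fixes nu :: "'a::field \<Rightarrow> int"
  assumes discrete_valuation: "discrete_valuation nu"
begin

lemma nu_mult: "x \<noteq> 0 \<Longrightarrow> y \<noteq> 0 \<Longrightarrow> nu (x * y) = nu x + nu y"
  using discrete_valuation unfolding discrete_valuation_def by blast

lemma nu_add: "x \<noteq> 0 \<Longrightarrow> y \<noteq> 0 \<Longrightarrow> x + y \<noteq> 0 \<Longrightarrow> min (nu x) (nu y) \<le> nu (x + y)"
  using discrete_valuation unfolding discrete_valuation_def by blast

lemma nu_one [simp]: "nu 1 = 0"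
  using nu_mult[of 1 1] by simp

lemma nu_minus: "nu (- x) = nu x"
proof (cases "x = 0")
  case False
  have "nu (- 1) = 0" using nu_mult[of "- 1" "- 1"] by simp
  then show ?thesis using nu_mult[of "- 1" x] False by simp
qed simp

lemma nu_inverse: "x \<noteq> 0 \<Longrightarrow> nu (inverse x) = - nu x"
  using nu_mult[of "inverse x" x] by simp

lemma vge_zero [simp]: "vge nu 0 n"
  by (simp add: vge_def)

lemma vge_mono: "vge nu x n \<Longrightarrow> m \<le> n \<Longrightarrow> vge nu x m"
  unfolding vge_def by auto

lemma vge_add: "vge nu x n \<Longrightarrow> vge nu y n \<Longrightarrow> vge nu (x + y) n"
  using nu_add[of x y] unfolding vge_def by (cases "x = 0"; cases "y = 0"; cases "x + y = 0") auto

lemma vge_minus_iff [simp]: "vge nu (- x) n \<longleftrightarrow> vge nu x n"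
  by (simp add: vge_def nu_minus)

lemma vge_diff: "vge nu x n \<Longrightarrow> vge nu y n \<Longrightarrow> vge nu (x - y) n"
  using vge_add[of x n "- y"] by simp

lemma vge_mult: "vge nu x m \<Longrightarrow> vge nu y n \<Longrightarrow> vge nu (x * y) (m + n)"
  using nu_mult[of x y] unfolding vge_def by (cases "x = 0"; cases "y = 0") auto

lemma vge_mult_integral_left: "vge nu x 0 \<Longrightarrow> vge nu y n \<Longrightarrow> vge nu (x * y) n"
  using vge_mult[of x 0 y n] by simp

lemma vge_mult_integral_right: "vge nu x n \<Longrightarrow> vge nu y 0 \<Longrightarrow> vge nu (x * y) n"
  using vge_mult[of x n y 0] by simp

lemma vge_one [simp]: "vge nu 1 0"
  by (simp add: vge_def)

lemma val_unit_vge: "val_unit nu x \<Longrightarrow> vge nu x 0"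
  by (simp add: val_unit_def vge_def)

lemma val_unit_not_vge_1: "val_unit nu x \<Longrightarrow> \<not> vge nu x 1"
  by (simp add: val_unit_def vge_def)

lemma val_unitI: "vge nu x 0 \<Longrightarrow> \<not> vge nu x 1 \<Longrightarrow> val_unit nu x"
  by (auto simp: val_unit_def vge_def)

lemma val_unit_mult: "val_unit nu x \<Longrightarrow> val_unit nu y \<Longrightarrow> val_unit nu (x * y)"
  by (simp add: val_unit_def nu_mult)

lemma val_unit_minus: "val_unit nu x \<Longrightarrow> val_unit nu (- x)"
  by (simp add: val_unit_def nu_minus)

lemma val_unit_inverse: "val_unit nu x \<Longrightarrow> val_unit nu (inverse x)"
  by (simp add: val_unit_def nu_inverse)

lemma val_unit_add_vge_1:
  assumes "val_unit nu x" "vge nu t 1"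
  shows "val_unit nu (x + t)"
proof (rule val_unitI)
  show "vge nu (x + t) 0"
    using assms vge_add[OF val_unit_vge vge_mono[of t 1 0]] by simp
  show "\<not> vge nu (x + t) 1"
    using vge_diff[of "x + t" 1 t] assms val_unit_not_vge_1 by auto
qed

end

lemmas ext_defs = eadd_def eneg_def emul_def econj_def ezero_def eone_def

definition enorm :: "'a::field \<Rightarrow> 'a ext \<Rightarrow> 'a" where
  "enorm e x = fst x * fst x - e * snd x * snd x"

definition escale :: "'a::field \<Rightarrow> 'a ext \<Rightarrow> 'a ext" where
  "escale c x = (c * fst x, c * snd x)"

lemma enorm_emul: "enorm e (emul e x y) = enorm e x * enorm e y"
  by (simp add: enorm_def emul_def algebra_simps)

lemma enorm_econj [simp]: "enorm e (econj x) = enorm e x"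
  by (simp add: enorm_def econj_def)

lemma emul_einv:
  assumes "enorm e x \<noteq> 0"
  shows "emul e x (einv e x) = eone"
proof -
  obtain a b where x: "x = (a, b)" by fastforce
  define n where "n = a * a - e * b * b"
  have "n \<noteq> 0" using assms by (simp add: x n_def enorm_def)
  moreover have "einv e x = (a / n, - b / n)" by (simp add: x n_def einv_def Let_def)
  ultimately show ?thesis
    by (simp add: x emul_def eone_def n_def add_divide_distrib[symmetric]
        diff_divide_distrib[symmetric] algebra_simps)
qed

lemma emul_assoc: "emul e (emul e x y) z = emul e x (emul e y z)"
  by (simp add: emul_def algebra_simps)

lemma emul_commute: "emul e x y = emul e y x"
  by (simp add: emul_def algebra_simps)

lemma emul_eone_left [simp]: "emul e eone x = x"
  by (simp add: emul_def eone_def)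

lemma einv_econj: "einv e (econj x) = econj (einv e x)"
  by (simp add: einv_def econj_def Let_def)

definition mI :: "'a::field m2" where
  "mI = M2 eone ezero ezero eone"

fun mconj :: "'a::field m2 \<Rightarrow> 'a m2" where
  "mconj (M2 a b c d) = M2 (econj a) (econj b) (econj c) (econj d)"

lemma mmul_assoc: "mmul e (mmul e A B) C = mmul e A (mmul e B C)"
  by (cases A; cases B; cases C) (simp add: ext_defs algebra_simps)

lemma mmul_mI_left [simp]: "mmul e mI A = A"
  by (cases A) (simp add: mI_def ext_defs)

lemma mmul_mI_right [simp]: "mmul e A mI = A"
  by (cases A) (simp add: mI_def ext_defs)

lemma mmul_msub_right: "mmul e A (msub B C) = msub (mmul e A B) (mmul e A C)"
  by (cases A; cases B; cases C) (simp add: msub_def ext_defs algebra_simps)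

lemma mmul_madd_right: "mmul e A (madd B C) = madd (mmul e A B) (mmul e A C)"
  by (cases A; cases B; cases C) (simp add: ext_defs algebra_simps)

lemma mmul_madd_left: "mmul e (madd A B) C = madd (mmul e A C) (mmul e B C)"
  by (cases A; cases B; cases C) (simp add: ext_defs algebra_simps)

lemma mmul_mzero_left [simp]: "mmul e mzero A = mzero"
  by (cases A) (simp add: mzero_def ext_defs)

lemma mmul_mzero_right [simp]: "mmul e A mzero = mzero"
  by (cases A) (simp add: mzero_def ext_defs)

lemma msub_eq_mzero_iff: "msub A B = mzero \<longleftrightarrow> A = B"
  by (cases A; cases B) (auto simp: msub_def mzero_def ext_defs prod_eq_iff)

lemma mw_mw [simp]: "mmul e mw mw = mI"
  by (simp add: mI_def mw_def ext_defs)

lemma mstar_mw [simp]: "mstar mw = mw"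
  by (simp add: mw_def ext_defs)

lemma mstar_mI [simp]: "mstar mI = mI"
  by (simp add: mI_def ext_defs)

lemma mstar_mstar [simp]: "mstar (mstar A) = A"
  by (cases A) (simp add: ext_defs)

lemma mstar_mmul: "mstar (mmul e A B) = mmul e (mstar B) (mstar A)"
  by (cases A; cases B) (simp add: ext_defs algebra_simps)

lemma mconj_mmul: "mconj (mmul e A B) = mmul e (mconj A) (mconj B)"
  by (cases A; cases B) (simp add: ext_defs algebra_simps)

lemma mdet_mmul: "mdet e (mmul e A B) = emul e (mdet e A) (mdet e B)"
  by (cases A; cases B) (simp add: ext_defs prod_eq_iff algebra_simps)

lemma mdet_mstar: "mdet e (mstar A) = econj (mdet e A)"
  by (cases A) (simp add: ext_defs prod_eq_iff algebra_simps)

lemma mdet_mconj: "mdet e (mconj A) = econj (mdet e A)"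
  by (cases A) (simp add: ext_defs prod_eq_iff algebra_simps)

lemma econj_emul: "econj (emul e x y) = emul e (econj x) (econj y)"
  by (simp add: ext_defs)

lemma econj_eneg: "econj (eneg x) = eneg (econj x)"
  by (simp add: ext_defs)

lemma mconj_mconj [simp]: "mconj (mconj A) = A"
  by (cases A) (simp add: econj_def)

lemma mconj_minv: "mconj (minv e A) = minv e (mconj A)"
proof (cases A)
  case (M2 a b c d)
  have "einv e (mdet e (mconj A)) = econj (einv e (mdet e A))"
    by (simp only: mdet_mconj einv_econj)
  then show ?thesis
    by (simp add: M2 Let_def econj_emul econj_eneg del: mdet.simps)
qed

lemma minv_mmul_left:
  assumes "enorm e (mdet e A) \<noteq> 0"
  shows "mmul e (minv e A) A = mI"
proof (cases A)
  case (M2 a b c d)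
  have "emul e (mdet e A) (einv e (mdet e A)) = eone"
    using emul_einv[OF assms] .
  then show ?thesis
    unfolding M2 by (simp add: Let_def mI_def ext_defs prod_eq_iff algebra_simps)
qed

lemma minv_mmul_right:
  assumes "enorm e (mdet e A) \<noteq> 0"
  shows "mmul e A (minv e A) = mI"
proof (cases A)
  case (M2 a b c d)
  have "emul e (mdet e A) (einv e (mdet e A)) = eone"
    using emul_einv[OF assms] .
  then show ?thesis
    unfolding M2 by (simp add: Let_def mI_def ext_defs prod_eq_iff algebra_simps)
qed


section \<open>The unitary group and its Lie algebra\<close>

lemma U11_enorm_mdet:
  assumes "g \<in> U11 e"
  shows "enorm e (mdet e g) = 1"
proof -
  have "mdet e (mmul e (mmul e (mstar g) mw) g) = mdet e mw"
    using assms by (simp add: U11_def)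
  then have "emul e (emul e (econj (mdet e g)) (mdet e mw)) (mdet e g) = mdet e mw"
    by (simp only: mdet_mmul mdet_mstar)
  then show ?thesis
    by (simp add: mw_def ext_defs enorm_def prod_eq_iff algebra_simps)
qed

lemma U11_minv_mmul_left: "g \<in> U11 e \<Longrightarrow> mmul e (minv e g) g = mI"
  by (simp add: minv_mmul_left U11_enorm_mdet)

lemma U11_minv_mmul_right: "g \<in> U11 e \<Longrightarrow> mmul e g (minv e g) = mI"
  by (simp add: minv_mmul_right U11_enorm_mdet)

lemma U11_mmul:
  assumes "g \<in> U11 e" "h \<in> U11 e"
  shows "mmul e g h \<in> U11 e"
proof -
  have "mmul e (mmul e (mstar (mmul e g h)) mw) (mmul e g h)
      = mmul e (mstar h) (mmul e (mmul e (mmul e (mstar g) mw) g) h)"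
    by (simp add: mstar_mmul mmul_assoc)
  also have "\<dots> = mw"
    using assms by (simp add: U11_def mmul_assoc[symmetric])
  finally show ?thesis by (simp add: U11_def)
qed

lemma U11_minv:
  assumes "g \<in> U11 e"
  shows "minv e g \<in> U11 e"
proof -
  let ?h = "minv e g"
  have "mmul e (mmul e (mstar ?h) mw) ?h
      = mmul e (mmul e (mstar ?h) (mmul e (mmul e (mstar g) mw) g)) ?h"
    using assms by (simp add: U11_def)
  also have "\<dots> = mmul e (mmul e (mstar (mmul e g ?h)) mw) (mmul e g ?h)"
    by (simp add: mstar_mmul mmul_assoc)
  also have "\<dots> = mw"
    using U11_minv_mmul_right[OF assms] by simp
  finally show ?thesis by (simp add: U11_def)
qed

lemma lie_u11_conj:
  assumes g: "g \<in> U11 e" and Y: "Y \<in> lie_u11 e"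
  shows "mmul e (mmul e (minv e g) Y) g \<in> lie_u11 e"
proof -
  let ?h = "minv e g"
  have w_h: "mmul e mw ?h = mmul e (mstar g) mw"
  proof -
    have "mmul e mw ?h = mmul e (mmul e (mmul e (mstar g) mw) g) ?h"
      using g by (simp add: U11_def)
    also have "\<dots> = mmul e (mstar g) mw"
      using U11_minv_mmul_right[OF g] by (simp add: mmul_assoc)
    finally show ?thesis .
  qed
  have "mstar (mmul e mw ?h) = mstar (mmul e (mstar g) mw)"
    using w_h by simp
  then have h_w: "mmul e (mstar ?h) mw = mmul e mw g"
    by (simp add: mstar_mmul)
  have "madd (mmul e (mstar (mmul e (mmul e ?h Y) g)) mw) (mmul e mw (mmul e (mmul e ?h Y) g))
      = madd (mmul e (mstar g) (mmul e (mstar Y) (mmul e (mstar ?h) mw)))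
             (mmul e (mmul e mw ?h) (mmul e Y g))"
    by (simp add: mstar_mmul mmul_assoc)
  also have "\<dots> = mmul e (mstar g) (mmul e (madd (mmul e (mstar Y) mw) (mmul e mw Y)) g)"
    unfolding h_w w_h by (simp add: mmul_assoc mmul_madd_left mmul_madd_right)
  also have "\<dots> = mzero"
    using Y by (simp add: lie_u11_def)
  finally show ?thesis by (simp add: lie_u11_def)
qed

lemma lie_u11_msub:
  assumes "A \<in> lie_u11 e" "B \<in> lie_u11 e"
  shows "msub A B \<in> lie_u11 e"
proof -
  have "madd (mmul e (mstar (msub A B)) mw) (mmul e mw (msub A B))
      = msub (madd (mmul e (mstar A) mw) (mmul e mw A)) (madd (mmul e (mstar B) mw) (mmul e mw B))"
    by (cases A; cases B) (simp add: mw_def msub_def ext_defs algebra_simps)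
  then show ?thesis
    using assms by (simp add: lie_u11_def msub_eq_mzero_iff)
qed

lemma Xuv_in_lie_u11: "Xuv u v \<in> lie_u11 e"
  by (simp add: Xuv_def lie_u11_def mw_def mzero_def ext_defs)

lemma lie_u11_offdiag_fst:
  fixes Y :: "'a::field m2"
  assumes "Y \<in> lie_u11 e" "(2::'a::field) \<noteq> 0"
  shows "fst (m12 Y) = 0" "fst (m21 Y) = 0"
proof -
  obtain a b c d where Y: "Y = M2 a b c d" by (cases Y)
  have "madd (mmul e (mstar Y) mw) (mmul e mw Y) = mzero"
    using assms by (simp add: lie_u11_def)
  then have "2 * fst b = 0" "2 * fst c = 0"
    by (simp_all add: Y mw_def mzero_def ext_defs prod_eq_iff)
  then show "fst (m12 Y) = 0" "fst (m21 Y) = 0"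
    using assms(2) by (simp_all add: Y)
qed

section \<open>Matrices commuting with X\<close>

(* With w = v/u, the matrices commuting with Xuv u v are the torus_mat w a b = ((a, b), (w b, a));
   T(X) consists of the unitary integral ones. *)
definition torus_mat :: "'a::field \<Rightarrow> 'a ext \<Rightarrow> 'a ext \<Rightarrow> 'a m2" where
  "torus_mat w a b = M2 a b (escale w b) a"

lemma torus_mat_mmul:
  "mmul e (torus_mat w a b) (torus_mat w a' b')
     = torus_mat w (eadd (emul e a a') (escale w (emul e b b')))
                   (eadd (emul e a b') (emul e b a'))"
  by (simp add: torus_mat_def escale_def ext_defs prod_eq_iff algebra_simps)

lemma mconj_torus_mat: "mconj (torus_mat w a b) = torus_mat w (econj a) (econj b)"
  by (simp add: torus_mat_def escale_def econj_def)

lemma minv_torus_mat: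
  "minv e (torus_mat w a b) = torus_mat w (emul e a (einv e (mdet e (torus_mat w a b))))
                                (eneg (emul e b (einv e (mdet e (torus_mat w a b)))))"
  by (simp add: torus_mat_def Let_def escale_def ext_defs algebra_simps del: mdet.simps)

lemma mstar_torus_mat_mw:
  "mmul e (mstar (torus_mat w a b)) mw = mmul e mw (mconj (torus_mat w a b))"
  by (simp add: torus_mat_def escale_def mw_def ext_defs)

lemma torus_mat_in_U11_iff:
  "torus_mat w a b \<in> U11 e \<longleftrightarrow> mmul e (mconj (torus_mat w a b)) (torus_mat w a b) = mI"
proof -
  have "torus_mat w a b \<in> U11 e
      \<longleftrightarrow> mmul e mw (mmul e (mconj (torus_mat w a b)) (torus_mat w a b)) = mmul e mw mI"
    unfolding U11_def mem_Collect_eq mstar_torus_mat_mw by (simp add: mmul_assoc)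
  also have "\<dots> \<longleftrightarrow> mmul e (mconj (torus_mat w a b)) (torus_mat w a b) = mI"
    by (metis mmul_assoc mmul_mI_left mw_mw)
  finally show ?thesis .
qed

lemma torus_mat_Xuv_commute:
  "v = w * u \<Longrightarrow> mmul e (torus_mat w a b) (Xuv u v) = mmul e (Xuv u v) (torus_mat w a b)"
  by (simp add: torus_mat_def Xuv_def escale_def ext_defs algebra_simps)


lemma cayley_mconj_mmul:
  fixes z :: "'a::field m2"
  assumes "enorm e (mdet e z) \<noteq> 0"
  defines "c \<equiv> mmul e (minv e (mconj z)) z"
  shows "mmul e (mconj c) c = mI"
proof -
  have z': "enorm e (mdet e (mconj z)) \<noteq> 0"
    using assms(1) by (simp add: mdet_mconj del: mdet.simps)
  have "mmul e (mconj c) c = mmul e (minv e z) (mmul e (mmul e (mconj z) (minv e (mconj z))) z)"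
    by (simp add: c_def mconj_mmul mconj_minv mmul_assoc)
  also have "\<dots> = mI"
    using minv_mmul_right[OF z'] minv_mmul_left[OF assms(1)] by simp
  finally show ?thesis .
qed

lemma cayley_msub:
  assumes "enorm e (mdet e z) \<noteq> 0"
  shows "msub (mmul e (minv e (mconj z)) z) \<kappa>
           = mmul e (minv e (mconj z)) (msub z (mmul e (mconj z) \<kappa>))"
proof -
  have "enorm e (mdet e (mconj z)) \<noteq> 0"
    using assms by (simp add: mdet_mconj del: mdet.simps)
  then show ?thesis
    by (simp add: mmul_msub_right mmul_assoc[symmetric] minv_mmul_left)
qed

lemma torus_mat_twist_defect:
  fixes w e :: "'a::field" and l a b :: "'a ext"
  defines "z \<equiv> torus_mat w (eadd l (emul e (econj l) a)) (emul e (econj l) b)"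
  shows "msub z (mmul e (mconj z) (torus_mat w a b))
           = mmul e (torus_mat w l ezero)
               (msub mI (mmul e (mconj (torus_mat w a b)) (torus_mat w a b)))"
  by (simp add: z_def torus_mat_def mI_def msub_def escale_def ext_defs prod_eq_iff algebra_simps)

definition OE_unit :: "('a::field \<Rightarrow> int) \<Rightarrow> 'a \<Rightarrow> 'a ext \<Rightarrow> bool" where
  "OE_unit nu e x \<longleftrightarrow> x \<in> pE nu 0 \<and> val_unit nu (enorm e x)"

definition mat_pE :: "('a::field \<Rightarrow> int) \<Rightarrow> int \<Rightarrow> 'a m2 \<Rightarrow> bool" where
  "mat_pE nu n M \<longleftrightarrow> entries_in (pE nu n) (pE nu n) M"

lemma mat_pE_M2 [simp]:
  "mat_pE nu n (M2 a b c d) \<longleftrightarrow> a \<in> pE nu n \<and> b \<in> pE nu n \<and> c \<in> pE nu n \<and> d \<in> pE nu n"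
  by (auto simp: mat_pE_def entries_in_def)

locale unramified_quadratic = discretely_valued nu for nu :: "'a::field \<Rightarrow> int" +
  fixes e :: 'a
  assumes eps_unit: "val_unit nu e"
    and two_unit: "val_unit nu 2"
begin

lemma pE_iff: "x \<in> pE nu n \<longleftrightarrow> vge nu (fst x) n \<and> vge nu (snd x) n"
  by (simp add: pE_def)

lemma pE_mono: "x \<in> pE nu n \<Longrightarrow> m \<le> n \<Longrightarrow> x \<in> pE nu m"
  by (auto simp: pE_iff intro: vge_mono)

lemma pE_eadd: "x \<in> pE nu n \<Longrightarrow> y \<in> pE nu n \<Longrightarrow> eadd x y \<in> pE nu n"
  by (simp add: pE_iff eadd_def vge_add)

lemma pE_eneg_iff [simp]: "eneg x \<in> pE nu n \<longleftrightarrow> x \<in> pE nu n"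
  by (simp add: pE_iff eneg_def)

lemma pE_econj_iff [simp]: "econj x \<in> pE nu n \<longleftrightarrow> x \<in> pE nu n"
  by (simp add: pE_iff econj_def)

lemma pE_ezero [simp]: "ezero \<in> pE nu n"
  by (simp add: pE_iff ezero_def)

lemma pE_eone [simp]: "eone \<in> pE nu 0"
  by (simp add: pE_iff eone_def)

lemma pE_emul:
  assumes "x \<in> pE nu m" "y \<in> pE nu n"
  shows "emul e x y \<in> pE nu (m + n)"
proof -
  have "vge nu (fst x * fst y) (m + n)" "vge nu (snd x * snd y) (m + n)"
    "vge nu (fst x * snd y) (m + n)" "vge nu (snd x * fst y) (m + n)"
    using assms by (auto simp: pE_iff intro!: vge_mult)
  then show ?thesis
    using vge_mult_integral_left[OF val_unit_vge[OF eps_unit]]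
    by (simp add: pE_iff emul_def vge_add mult.assoc)
qed

lemma pE_emul_integral_left: "x \<in> pE nu 0 \<Longrightarrow> y \<in> pE nu n \<Longrightarrow> emul e x y \<in> pE nu n"
  using pE_emul[of x 0 y n] by simp

lemma pE_emul_integral_right: "x \<in> pE nu n \<Longrightarrow> y \<in> pE nu 0 \<Longrightarrow> emul e x y \<in> pE nu n"
  using pE_emul[of x n y 0] by simp

lemma pE_escale: "vge nu c m \<Longrightarrow> x \<in> pE nu n \<Longrightarrow> escale c x \<in> pE nu (m + n)"
  by (simp add: pE_iff escale_def vge_mult)

lemma pE_escale_integral: "vge nu c 0 \<Longrightarrow> x \<in> pE nu n \<Longrightarrow> escale c x \<in> pE nu n"
  using pE_escale[of c 0 x n] by simp

lemma vge_enorm: "x \<in> pE nu 0 \<Longrightarrow> vge nu (enorm e x) 0"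
  using val_unit_vge[OF eps_unit]
  by (auto simp: pE_iff enorm_def mult.assoc intro!: vge_diff vge_mult_integral_left)

lemma OE_unit_emul: "OE_unit nu e x \<Longrightarrow> OE_unit nu e y \<Longrightarrow> OE_unit nu e (emul e x y)"
  by (simp add: OE_unit_def enorm_emul val_unit_mult pE_emul_integral_left)

lemma OE_unit_econj: "OE_unit nu e x \<Longrightarrow> OE_unit nu e (econj x)"
  by (simp add: OE_unit_def)

lemma OE_unit_eadd_pE_1:
  assumes x: "OE_unit nu e x" and t: "t \<in> pE nu 1"
  shows "OE_unit nu e (eadd x t)"
proof -
  have "enorm e (eadd x t) = enorm e x + (2 * fst (emul e (econj x) t) + enorm e t)"
    by (simp add: enorm_def ext_defs algebra_simps)
  moreover have "vge nu (2 * fst (emul e (econj x) t) + enorm e t) 1"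
  proof -
    have "emul e (econj x) t \<in> pE nu 1"
      using x t by (simp add: OE_unit_def pE_emul_integral_left)
    moreover have "enorm e t = fst (emul e (econj t) t)"
      by (simp add: enorm_def ext_defs)
    moreover have "emul e (econj t) t \<in> pE nu 1"
      using t pE_mono[OF t] by (simp add: pE_emul_integral_right)
    ultimately show ?thesis
      using val_unit_vge[OF two_unit] by (simp add: pE_iff vge_add vge_mult_integral_left)
  qed
  ultimately show ?thesis
    using x t pE_mono[OF t] by (simp add: OE_unit_def pE_eadd val_unit_add_vge_1)
qed

lemma einv_in_pE_0:
  assumes "OE_unit nu e x"
  shows "einv e x \<in> pE nu 0"
proof -
  have "einv e x = escale (inverse (enorm e x)) (econj x)"
    by (simp add: einv_def escale_def enorm_def econj_def Let_def divide_inverse algebra_simps)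
  then show ?thesis
    using assms by (simp add: OE_unit_def pE_escale_integral val_unit_vge val_unit_inverse)
qed

lemma pE_emul_OE_unit_iff:
  assumes "OE_unit nu e x"
  shows "emul e x y \<in> pE nu n \<longleftrightarrow> y \<in> pE nu n"
proof
  assume "emul e x y \<in> pE nu n"
  then have "emul e (einv e x) (emul e x y) \<in> pE nu n"
    using einv_in_pE_0[OF assms] by (simp add: pE_emul_integral_left)
  moreover have "emul e (einv e x) (emul e x y) = y"
    using emul_einv[of e x] assms
    by (simp add: OE_unit_def val_unit_def emul_assoc[symmetric] emul_commute[of e "einv e x"])
  ultimately show "y \<in> pE nu n" by simp
next
  assume "y \<in> pE nu n"
  then show "emul e x y \<in> pE nu n"
    using assms by (simp add: OE_unit_def pE_emul_integral_left)
qed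

lemma mat_pE_mmul: "mat_pE nu m A \<Longrightarrow> mat_pE nu n B \<Longrightarrow> mat_pE nu (m + n) (mmul e A B)"
  by (cases A; cases B) (simp add: pE_eadd pE_emul)

lemma mat_pE_mmul_integral_left: "mat_pE nu 0 A \<Longrightarrow> mat_pE nu n B \<Longrightarrow> mat_pE nu n (mmul e A B)"
  using mat_pE_mmul[of 0 A n B] by simp

lemma mat_pE_mmul_integral_right: "mat_pE nu n A \<Longrightarrow> mat_pE nu 0 B \<Longrightarrow> mat_pE nu n (mmul e A B)"
  using mat_pE_mmul[of n A 0 B] by simp

lemma mat_pE_madd: "mat_pE nu n A \<Longrightarrow> mat_pE nu n B \<Longrightarrow> mat_pE nu n (madd A B)"
  by (cases A; cases B) (simp add: pE_eadd)

lemma mat_pE_msub: "mat_pE nu n A \<Longrightarrow> mat_pE nu n B \<Longrightarrow> mat_pE nu n (msub A B)"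
  by (cases A; cases B) (simp add: msub_def pE_eadd)

lemma mat_pE_msub_trans:
  assumes "mat_pE nu n (msub A B)" "mat_pE nu n (msub B C)"
  shows "mat_pE nu n (msub A C)"
proof -
  have "msub A C = madd (msub A B) (msub B C)"
    by (cases A; cases B; cases C) (simp add: msub_def ext_defs)
  then show ?thesis
    using assms by (simp add: mat_pE_madd)
qed

lemma mat_pE_msub_commute: "mat_pE nu n (msub A B) \<longleftrightarrow> mat_pE nu n (msub B A)"
proof -
  have "msub B A = mneg (msub A B)"
    by (cases A; cases B) (simp add: msub_def ext_defs)
  moreover have "mat_pE nu n (mneg M) \<longleftrightarrow> mat_pE nu n M" for M :: "'a m2"
    by (cases M) simp
  ultimately show ?thesis by simp
qed

lemma mat_pE_mstar_iff [simp]: "mat_pE nu n (mstar A) \<longleftrightarrow> mat_pE nu n A"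
  by (cases A) auto

lemma mat_pE_mconj_iff [simp]: "mat_pE nu n (mconj A) \<longleftrightarrow> mat_pE nu n A"
  by (cases A) auto

lemma mat_pE_mw [simp]: "mat_pE nu 0 mw"
  by (simp add: mw_def)

lemma mat_pE_Xuv: "vge nu u 0 \<Longrightarrow> vge nu v 0 \<Longrightarrow> mat_pE nu 0 (Xuv u v)"
  by (simp add: Xuv_def pE_iff)

lemma mat_pE_minv:
  assumes "mat_pE nu 0 A" "OE_unit nu e (mdet e A)"
  shows "mat_pE nu 0 (minv e A)"
  using assms einv_in_pE_0[OF assms(2)]
  by (cases A) (simp add: Let_def pE_emul_integral_left del: mdet.simps)

lemma Kgrp_iff: "g \<in> Kgrp nu e \<longleftrightarrow> g \<in> U11 e \<and> mat_pE nu 0 g"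
  by (simp add: Kgrp_def mat_pE_def OE_def pE_def)

lemma Kfilt_iff: "g \<in> Kfilt nu e n \<longleftrightarrow> g \<in> U11 e \<and> mat_pE nu n (msub g mI)"
  by (cases g) (auto simp: Kfilt_def msub_def mI_def ext_defs pE_iff)

lemma OE_unit_mdet_Kgrp:
  assumes "g \<in> Kgrp nu e"
  shows "OE_unit nu e (mdet e g)"
proof -
  have "mdet e g \<in> pE nu 0"
    using assms by (cases g) (simp add: Kgrp_iff pE_eadd pE_emul_integral_left)
  then show ?thesis
    using assms by (simp add: Kgrp_iff OE_unit_def U11_enorm_mdet val_unit_def)
qed

lemma Kgrp_minv: "g \<in> Kgrp nu e \<Longrightarrow> minv e g \<in> Kgrp nu e"
  by (simp add: Kgrp_iff U11_minv mat_pE_minv OE_unit_mdet_Kgrp)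

section \<open>Reduction to a commutator condition\<close>

lemma frak_k_r_iff_mat_pE:
  assumes Z: "Z \<in> lie_u11 e" and s: "0 \<le> s"
  shows "Z \<in> frak_k_r nu e s \<longleftrightarrow> mat_pE nu \<lceil>s\<rceil> Z"
proof -
  obtain a b c d where Z_eq: "Z = M2 a b c d" by (cases Z)
  have "fst b = 0" "fst c = 0"
    using lie_u11_offdiag_fst[OF Z] two_unit by (simp_all add: Z_eq val_unit_def)
  moreover have "x \<in> pE nu \<lceil>s\<rceil> \<Longrightarrow> x \<in> pE nu 0" for x
    using s by (auto intro: pE_mono)
  ultimately show ?thesis
    using Z by (auto simp: Z_eq frak_k_r_def frak_k_def entries_in_def sqeps_pF_def OE_def pE_iff)
qed

lemma mat_pE_mmul_Kgrp_iff:
  assumes "k \<in> Kgrp nu e"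
  shows "mat_pE nu n (mmul e k Z) \<longleftrightarrow> mat_pE nu n Z"
proof
  assume "mat_pE nu n (mmul e k Z)"
  then have "mat_pE nu n (mmul e (minv e k) (mmul e k Z))"
    using Kgrp_minv[OF assms] by (simp add: Kgrp_iff mat_pE_mmul_integral_left)
  then show "mat_pE nu n Z"
    using assms by (simp add: Kgrp_iff U11_minv_mmul_left mmul_assoc[symmetric])
next
  assume "mat_pE nu n Z"
  then show "mat_pE nu n (mmul e k Z)"
    using assms by (simp add: Kgrp_iff mat_pE_mmul_integral_left)
qed

lemma conj_sub_in_frak_k_r_iff:
  assumes k: "k \<in> Kgrp nu e" and X: "X \<in> lie_u11 e" and s: "0 \<le> s"
  shows "msub (mmul e (mmul e (minv e k) X) k) X \<in> frak_k_r nu e s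
           \<longleftrightarrow> mat_pE nu \<lceil>s\<rceil> (msub (mmul e X k) (mmul e k X))"
proof -
  let ?Z = "msub (mmul e (mmul e (minv e k) X) k) X"
  have kU: "k \<in> U11 e" using k by (simp add: Kgrp_iff)
  have "?Z \<in> lie_u11 e"
    using lie_u11_msub[OF lie_u11_conj[OF kU X] X] .
  moreover have "mmul e k ?Z = msub (mmul e X k) (mmul e k X)"
    using U11_minv_mmul_right[OF kU] by (simp add: mmul_msub_right mmul_assoc[symmetric])
  ultimately show ?thesis
    using frak_k_r_iff_mat_pE[OF _ s] mat_pE_mmul_Kgrp_iff[OF k, of _ ?Z] by simp
qed

lemma commutator_mat_pE_of_factor:
  assumes X: "mat_pE nu 0 X" and c: "mat_pE nu 0 c" "mmul e c X = mmul e X c"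
    and g: "mat_pE nu n (msub g mI)"
  shows "mat_pE nu n (msub (mmul e X (mmul e c g)) (mmul e (mmul e c g) X))"
proof -
  have "msub (mmul e X g) (mmul e g X) = msub (mmul e X (msub g mI)) (mmul e (msub g mI) X)"
    by (cases X; cases g) (simp add: msub_def mI_def ext_defs algebra_simps)
  then have "mat_pE nu n (msub (mmul e X g) (mmul e g X))"
    using X g by (simp add: mat_pE_msub mat_pE_mmul_integral_left mat_pE_mmul_integral_right)
  moreover have "msub (mmul e X (mmul e c g)) (mmul e (mmul e c g) X)
      = mmul e c (msub (mmul e X g) (mmul e g X))"
    using c(2) by (simp add: mmul_msub_right mmul_assoc[symmetric])
  ultimately show ?thesis
    using c(1) by (simp add: mat_pE_mmul_integral_left)
qed

lemma mat_pE_sub_torus_mat_of_commutator: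
  assumes u: "val_unit nu u" and v: "v = w * u"
    and comm: "mat_pE nu n (msub (mmul e (Xuv u v) k) (mmul e k (Xuv u v)))"
  shows "mat_pE nu n (msub k (torus_mat w (m11 k) (m12 k)))"
proof -
  obtain A B C D where k: "k = M2 A B C D" by (cases k)
  have unit: "OE_unit nu e (0, u)"
    using u eps_unit
    by (simp add: OE_unit_def pE_iff enorm_def val_unit_vge val_unit_minus val_unit_mult mult.assoc)
  have "emul e (0, u) (eadd C (eneg (escale w B))) \<in> pE nu n"
       "emul e (0, u) (eadd D (eneg A)) \<in> pE nu n"
    using comm by (simp_all add: k v Xuv_def msub_def escale_def ext_defs algebra_simps)
  then have "eadd C (eneg (escale w B)) \<in> pE nu n" "eadd D (eneg A) \<in> pE nu n"
    by (simp_all add: pE_emul_OE_unit_iff[OF unit])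
  moreover have "msub k (torus_mat w (m11 k) (m12 k))
      = M2 ezero ezero (eadd C (eneg (escale w B))) (eadd D (eneg A))"
    by (simp add: k torus_mat_def msub_def ext_defs)
  ultimately show ?thesis by simp
qed

section \<open>Unitary torus matrices near an element of K\<close>

lemma U11_form_defect_mat_pE:
  assumes k: "k \<in> U11 e" "mat_pE nu 0 k" and \<kappa>: "mat_pE nu 0 \<kappa>"
    and near: "mat_pE nu n (msub k \<kappa>)"
  shows "mat_pE nu n (msub (mmul e (mmul e (mstar \<kappa>) mw) \<kappa>) mw)"
proof -
  let ?\<Delta> = "msub k \<kappa>"
  have "msub (mmul e (mmul e (mstar k) mw) k) (mmul e (mmul e (mstar \<kappa>) mw) \<kappa>)
      = madd (mmul e (mmul e (mstar ?\<Delta>) mw) k) (mmul e (mmul e (mstar \<kappa>) mw) ?\<Delta>)"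
    by (cases k; cases \<kappa>) (simp add: msub_def mw_def ext_defs algebra_simps)
  then have "mat_pE nu n (msub mw (mmul e (mmul e (mstar \<kappa>) mw) \<kappa>))"
    using k \<kappa> near
    by (simp add: U11_def mat_pE_madd mat_pE_mmul_integral_left mat_pE_mmul_integral_right)
  then show ?thesis
    by (simp add: mat_pE_msub_commute)
qed

lemma mconj_torus_mat_mmul_near_mI:
  assumes k: "k \<in> Kgrp nu e" and \<kappa>: "mat_pE nu 0 (torus_mat w a b)"
    and near: "mat_pE nu n (msub k (torus_mat w a b))"
  shows "mat_pE nu n (msub (mmul e (mconj (torus_mat w a b)) (torus_mat w a b)) mI)"
proof -
  let ?M = "mmul e (mconj (torus_mat w a b)) (torus_mat w a b)"
  have "mat_pE nu n (msub (mmul e mw ?M) mw)"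
    using U11_form_defect_mat_pE[of k, OF _ _ \<kappa> near] k
    by (simp add: Kgrp_iff mstar_torus_mat_mw mmul_assoc)
  then have "mat_pE nu n (mmul e mw (msub (mmul e mw ?M) mw))"
    by (simp add: mat_pE_mmul_integral_left)
  then show ?thesis
    by (simp add: mmul_msub_right mmul_assoc[symmetric])
qed

lemma exists_twist_OE_unit:
  assumes a: "a \<in> pE nu 0" and norm: "vge nu (enorm e a - 1) 1"
  obtains l where "l \<in> pE nu 0" "OE_unit nu e (eadd l (emul e (econj l) a))"
proof -
  have sum: "enorm e (eadd eone a) + enorm e (eadd eone (eneg a)) = 4 + 2 * (enorm e a - 1)"
    by (simp add: enorm_def ext_defs algebra_simps)
  have "val_unit nu (4 + 2 * (enorm e a - 1))"
  proof (rule val_unit_add_vge_1)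
    show "val_unit nu 4"
      using val_unit_mult[OF two_unit two_unit] by simp
    show "vge nu (2 * (enorm e a - 1)) 1"
      using vge_mult_integral_left[OF val_unit_vge[OF two_unit] norm] .
  qed
  then have "\<not> (vge nu (enorm e (eadd eone a)) 1 \<and> vge nu (enorm e (eadd eone (eneg a))) 1)"
    using sum vge_add val_unit_not_vge_1 by metis
  moreover have "eadd eone a \<in> pE nu 0" "eadd eone (eneg a) \<in> pE nu 0"
    using a by (simp_all add: pE_eadd)
  ultimately consider "OE_unit nu e (eadd eone a)" | "OE_unit nu e (eadd eone (eneg a))"
    by (metis OE_unit_def val_unitI vge_enorm)
  then show ?thesis
  proof cases
    case 1
    have "eadd eone (emul e (econj eone) a) = eadd eone a"
      by (simp add: ext_defs)
    then show ?thesis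
      using that[of eone] 1 by simp
  next
    case 2
    have sqrt_eps: "OE_unit nu e (0, 1)"
      using eps_unit by (simp add: OE_unit_def pE_iff enorm_def val_unit_minus)
    have "eadd (0, 1) (emul e (econj (0, 1)) a) = emul e (0, 1) (eadd eone (eneg a))"
      by (simp add: ext_defs)
    then show ?thesis
      using that[of "(0, 1)"] OE_unit_emul[OF sqrt_eps 2] by (simp add: pE_iff)
  qed
qed

lemma vge_enorm_sub_1_of_near_mI:
  assumes w: "vge nu w 1" and b: "b \<in> pE nu 0" and n: "1 \<le> n"
    and near: "mat_pE nu n (msub (mmul e (mconj (torus_mat w a b)) (torus_mat w a b)) mI)"
  shows "vge nu (enorm e a - 1) 1"
proof -
  let ?D = "msub (mmul e (mconj (torus_mat w a b)) (torus_mat w a b)) mI"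
  have "fst (m11 ?D) = enorm e a - 1 + w * enorm e b"
    by (simp add: torus_mat_def mI_def msub_def escale_def enorm_def ext_defs algebra_simps)
  moreover have "vge nu (fst (m11 ?D)) 1"
    using pE_mono[of _ n 1] near n by (cases ?D) (auto simp: pE_iff)
  moreover have "vge nu (w * enorm e b) 1"
    using vge_mult_integral_right[OF w vge_enorm[OF b]] .
  ultimately show ?thesis
    using vge_diff by fastforce
qed

lemma cayley_torus_mat_in_Kgrp:
  assumes z: "mat_pE nu 0 (torus_mat w p q)" and det: "OE_unit nu e (mdet e (torus_mat w p q))"
  obtains a b where "mmul e (minv e (mconj (torus_mat w p q))) (torus_mat w p q) = torus_mat w a b"
    and "torus_mat w a b \<in> Kgrp nu e"
proof -
  let ?z = "torus_mat w p q"
  let ?c = "mmul e (minv e (mconj ?z)) ?z"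
  obtain a b where c_eq: "?c = torus_mat w a b"
    by (simp add: mconj_torus_mat minv_torus_mat torus_mat_mmul)
  have "enorm e (mdet e ?z) \<noteq> 0"
    using det by (simp add: OE_unit_def val_unit_def)
  then have "mmul e (mconj ?c) ?c = mI"
    by (rule cayley_mconj_mmul)
  then have "?c \<in> U11 e"
    unfolding c_eq by (simp add: torus_mat_in_U11_iff)
  moreover have "mat_pE nu 0 ?c"
    using z det
    by (simp add: mdet_mconj OE_unit_econj mat_pE_minv mat_pE_mmul_integral_left del: mdet.simps)
  ultimately show ?thesis
    using that c_eq by (simp add: Kgrp_iff)
qed

lemma exists_Kgrp_torus_mat_near:
  assumes w: "vge nu w 1" and a: "a \<in> pE nu 0" and b: "b \<in> pE nu 0" and n: "1 \<le> n"
    and near: "mat_pE nu n (msub (mmul e (mconj (torus_mat w a b)) (torus_mat w a b)) mI)"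
  obtains a' b' where "torus_mat w a' b' \<in> Kgrp nu e"
    and "mat_pE nu n (msub (torus_mat w a' b') (torus_mat w a b))"
proof -
  obtain l where l: "l \<in> pE nu 0" and p_unit: "OE_unit nu e (eadd l (emul e (econj l) a))"
    using exists_twist_OE_unit[OF a vge_enorm_sub_1_of_near_mI[OF w b n near]] by blast
  define p where "p = eadd l (emul e (econj l) a)"
  define q where "q = emul e (econj l) b"
  define z where "z = torus_mat w p q"
  have q: "q \<in> pE nu 0"
    using l b by (simp add: q_def pE_emul_integral_left)
  have z: "mat_pE nu 0 z"
    using p_unit q vge_mono[OF w]
    by (simp add: z_def p_def torus_mat_def OE_unit_def pE_escale_integral)
  have "mdet e z = eadd (emul e p p) (eneg (escale w (emul e q q)))"
    by (simp add: z_def torus_mat_def escale_def ext_defs algebra_simps)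
  moreover have "eneg (escale w (emul e q q)) \<in> pE nu 1"
    using pE_escale[OF w pE_emul_integral_left[OF q q]] by simp
  ultimately have det_z: "OE_unit nu e (mdet e z)"
    using OE_unit_eadd_pE_1 OE_unit_emul p_unit p_def by metis
  then obtain a' b' where c_eq: "mmul e (minv e (mconj z)) z = torus_mat w a' b'"
      and c: "torus_mat w a' b' \<in> Kgrp nu e"
    using cayley_torus_mat_in_Kgrp z unfolding z_def by metis
  have "mat_pE nu n (msub (mmul e (minv e (mconj z)) z) (torus_mat w a b))"
  proof -
    have "mat_pE nu n (msub mI (mmul e (mconj (torus_mat w a b)) (torus_mat w a b)))"
      using near by (simp add: mat_pE_msub_commute)
    moreover have "mat_pE nu 0 (torus_mat w l ezero)"
      using l by (simp add: torus_mat_def escale_def ezero_def pE_iff)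
    moreover have "msub z (mmul e (mconj z) (torus_mat w a b))
        = mmul e (torus_mat w l ezero)
            (msub mI (mmul e (mconj (torus_mat w a b)) (torus_mat w a b)))"
      unfolding z_def p_def q_def by (rule torus_mat_twist_defect)
    moreover have "enorm e (mdet e z) \<noteq> 0" "OE_unit nu e (mdet e (mconj z))"
      using det_z by (simp_all add: OE_unit_def val_unit_def mdet_mconj del: mdet.simps)
    ultimately show ?thesis
      using z by (simp add: cayley_msub mat_pE_minv mat_pE_mmul_integral_left)
  qed
  then show ?thesis
    using that c c_eq by simp
qed

lemma Kgrp_factor_through_torus_mat:
  assumes k: "k \<in> Kgrp nu e" and w: "vge nu w 1" and n: "1 \<le> n"
    and near: "mat_pE nu n (msub k (torus_mat w (m11 k) (m12 k)))"
  obtains a b g where "torus_mat w a b \<in> Kgrp nu e" and "g \<in> Kfilt nu e n"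
    and "k = mmul e (torus_mat w a b) g"
proof -
  let ?\<kappa> = "torus_mat w (m11 k) (m12 k)"
  have entries: "m11 k \<in> pE nu 0" "m12 k \<in> pE nu 0"
    using k by (cases k; simp add: Kgrp_iff)+
  then have "mat_pE nu 0 ?\<kappa>"
    using vge_mono[OF w] by (simp add: torus_mat_def pE_escale_integral)
  then obtain a b where c: "torus_mat w a b \<in> Kgrp nu e"
      and c_near: "mat_pE nu n (msub (torus_mat w a b) ?\<kappa>)"
    using exists_Kgrp_torus_mat_near[OF w entries n] mconj_torus_mat_mmul_near_mI[OF k _ near]
    by blast
  let ?c = "torus_mat w a b"
  define g where "g = mmul e (minv e ?c) k"
  have cU: "?c \<in> U11 e" using c by (simp add: Kgrp_iff)
  have "g \<in> U11 e"
    using k cU by (simp add: g_def Kgrp_iff U11_mmul U11_minv)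
  moreover have "mat_pE nu n (msub g mI)"
  proof -
    have "mat_pE nu n (msub k ?c)"
      using mat_pE_msub_trans[OF near, of ?c] c_near mat_pE_msub_commute by blast
    then have "mat_pE nu n (mmul e (minv e ?c) (msub k ?c))"
      using Kgrp_minv[OF c] by (simp add: Kgrp_iff mat_pE_mmul_integral_left)
    then show ?thesis
      using U11_minv_mmul_left[OF cU] by (simp add: g_def mmul_msub_right)
  qed
  moreover have "k = mmul e ?c g"
    using U11_minv_mmul_right[OF cU] by (simp add: g_def mmul_assoc[symmetric])
  ultimately show ?thesis
    using that c by (simp add: Kfilt_iff)
qed

lemma commutator_Xuv_mat_pE_iff_factor:
  assumes u: "val_unit nu u" and v: "vge nu v 1" and k: "k \<in> Kgrp nu e" and n: "1 \<le> n"
  shows "mat_pE nu n (msub (mmul e (Xuv u v) k) (mmul e k (Xuv u v)))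
           \<longleftrightarrow> (\<exists>c \<in> centralizer_K nu e (Xuv u v). \<exists>g \<in> Kfilt nu e n. k = mmul e c g)"
proof
  define w where "w = v / u"
  have v_eq: "v = w * u" and w: "vge nu w 1"
    using u vge_mult_integral_right[OF v val_unit_vge[OF val_unit_inverse[OF u]]]
    by (simp_all add: w_def divide_inverse val_unit_def)
  assume "mat_pE nu n (msub (mmul e (Xuv u v) k) (mmul e k (Xuv u v)))"
  then obtain a b g where c: "torus_mat w a b \<in> Kgrp nu e" and "g \<in> Kfilt nu e n"
      and "k = mmul e (torus_mat w a b) g"
    using Kgrp_factor_through_torus_mat[OF k w n] mat_pE_sub_torus_mat_of_commutator[OF u v_eq]
    by metis
  moreover have "torus_mat w a b \<in> centralizer_K nu e (Xuv u v)"
    using c torus_mat_Xuv_commute[OF v_eq] by (simp add: centralizer_K_def)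
  ultimately show "\<exists>c \<in> centralizer_K nu e (Xuv u v). \<exists>g \<in> Kfilt nu e n. k = mmul e c g"
    by blast
next
  have X: "mat_pE nu 0 (Xuv u v)"
    using u vge_mono[OF v] by (simp add: mat_pE_Xuv val_unit_vge)
  assume "\<exists>c \<in> centralizer_K nu e (Xuv u v). \<exists>g \<in> Kfilt nu e n. k = mmul e c g"
  then show "mat_pE nu n (msub (mmul e (Xuv u v) k) (mmul e k (Xuv u v)))"
    using commutator_mat_pE_of_factor[OF X] by (auto simp: centralizer_K_def Kgrp_iff Kfilt_iff)
qed

end

theorem lemma5p4:
  fixes nu :: "'a::field \<Rightarrow> int" and e u v :: 'a and s :: real and k :: "'a m2"
  assumes "nonarch_local_field nu"
    and "residue_char_not_2 nu"
    and "nonsquare_unit nu e"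
    and "u \<noteq> 0" and "nu u = 0"
    and "v = 0 \<or> nu v > 0"
    and "s > 0"
    and "k \<in> Kgrp nu e"
  shows "msub (mmul e (mmul e (minv e k) (Xuv u v)) k) (Xuv u v) \<in> frak_k_r nu e s
         \<longleftrightarrow> (\<exists>c \<in> centralizer_K nu e (Xuv u v). \<exists>g \<in> Ks nu e s. k = mmul e c g)"
proof -
  interpret unramified_quadratic nu e
    using assms(1-3)
    by unfold_locales (auto simp: nonarch_local_field_def residue_char_not_2_def nonsquare_unit_def
        val_unit_def)
  have u: "val_unit nu u" and v: "vge nu v 1"
    using assms(4-6) by (auto simp: val_unit_def vge_def)
  have "1 \<le> \<lceil>s\<rceil>"
    using assms(7) by simp
  then show ?thesis
    using conj_sub_in_frak_k_r_iff[OF assms(8) Xuv_in_lie_u11] assms(7)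
      commutator_Xuv_mat_pE_iff_factor[OF u v assms(8)]
    by (simp add: Ks_def)
qed

end
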